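(* For every integer $r$ and every integer $n\ge 0$, \[ 2\sum_{j=0}^{n}(-1)^{rj}4^jF_r^{2n-2j}5^{n-j}=\sum_{j=0}^{n}\left(\frac{L_r^2}{2}\right)^j\left(5^{n-j}F_r^{2(n-j)}+(-1)^{r(n-j)}4^{n-j}\right)=2\,\frac{(5F_r^2)^{n+1}-(-1)^{r(n+1)}4^{n+1}}{5F_r^2-(-1)^r4}. \]
   Context: $F_n$ and $L_n$ denote the Fibonacci and Lucas numbers, defined for all integers $n$ by $F_0=0,F_1=1$, $L_0=2,L_1=1$ and $x_n=x_{n-1}+x_{n-2}$; equivalently $F_n=(\alpha^n-\beta^n)/(\alpha-\beta)$, $L_n=\alpha^n+\beta^n$ with $\alpha=(1+\sqrt5)/2$, $\beta=(1-\sqrt5)/2$. In particular $F_{-n}=(-1)^{n-1}F_n$ and $L_{-n}=(-1)^nL_n$. *)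

theory Defs
  imports Complex_Main "HOL-Number_Theory.Fib"
begin

definition fibz :: "int \<Rightarrow> int" where
  "fibz n = (if n \<ge> 0 then int (fib (nat n))
             else (-1) ^ (nat (-n) + 1) * int (fib (nat (-n))))"

fun lucn :: "nat \<Rightarrow> int" where
  "lucn 0 = 2"
| "lucn (Suc 0) = 1"
| "lucn (Suc (Suc n)) = lucn (Suc n) + lucn n"

definition lucz :: "int \<Rightarrow> int" where
  "lucz n = (if n \<ge> 0 then lucn (nat n)
             else (-1) ^ nat (-n) * lucn (nat (-n)))"

end

theory Submission
  imports Defs
begin

text \<open>
  Put \<open>a = 5 F_r^2\<close> and \<open>b = 4 (-1)^r\<close>. Cassini's identity gives \<open>L_r^2 = a + b\<close>,
  so everything is a polynomial in \<open>a\<close> and \<open>b\<close>. The first expression is twice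
  \<open>h_n = \<Sum>j\<le>n. b^j a^(n-j)\<close>; the second equals it by induction, using
  \<open>2 h_(n+1) = (a + b) h_n + a^(n+1) + b^(n+1)\<close>; the third is the geometric closed form
  of \<open>h_n\<close>, valid because \<open>a = b\<close> would force \<open>5 F_r^2 = \<plusminus>4\<close>, impossible modulo 5.
\<close>

lemma sum_powers_Suc_left:
  fixes a b :: "'a::comm_semiring_1"
  shows "(\<Sum>j=0..Suc n. b^j * a^(Suc n - j)) = a * (\<Sum>j=0..n. b^j * a^(n - j)) + b^Suc n"
proof -
  have "(\<Sum>j=0..n. b^j * a^(Suc n - j)) = (\<Sum>j=0..n. a * (b^j * a^(n - j)))"
    by (rule sum.cong) (auto simp: Suc_diff_le mult.left_commute)
  then show ?thesis
    by (simp add: sum_distrib_left)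
qed

lemma sum_powers_Suc_right:
  fixes a b :: "'a::comm_semiring_1"
  shows "(\<Sum>j=0..Suc n. b^j * a^(Suc n - j)) = b * (\<Sum>j=0..n. b^j * a^(n - j)) + a^Suc n"
  by (subst sum.atLeast0_atMost_Suc_shift) (simp add: sum_distrib_left algebra_simps)

lemma sum_mean_powers:
  fixes a b m :: "'a::comm_semiring_1"
  assumes "a + b = 2 * m"
  shows "(\<Sum>j=0..n. m^j * (a^(n - j) + b^(n - j))) = 2 * (\<Sum>j=0..n. b^j * a^(n - j))"
proof (induction n)
  case 0
  then show ?case by simp
next
  case (Suc n)
  have "(\<Sum>j=0..Suc n. m^j * (a^(Suc n - j) + b^(Suc n - j)))
      = a^Suc n + b^Suc n + m * (\<Sum>j=0..n. m^j * (a^(n - j) + b^(n - j)))"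
    by (subst sum.atLeast0_atMost_Suc_shift) (simp add: sum_distrib_left algebra_simps)
  also have "\<dots> = (a + b) * (\<Sum>j=0..n. b^j * a^(n - j)) + a^Suc n + b^Suc n"
    using Suc.IH assms by (simp add: algebra_simps)
  also have "\<dots> = 2 * (\<Sum>j=0..Suc n. b^j * a^(Suc n - j))"
    unfolding mult_2 by (subst (2) sum_powers_Suc_left, subst sum_powers_Suc_right)
      (simp add: algebra_simps)
  finally show ?case .
qed

lemma sum_powers_closed_form:
  fixes a b :: "'a::field"
  assumes "a \<noteq> b"
  shows "(\<Sum>j=0..n. b^j * a^(n - j)) = (a^(n + 1) - b^(n + 1)) / (a - b)"
  using diff_power_eq_sum[of b n a] assms
  by (simp add: atLeast0AtMost lessThan_Suc_atMost[symmetric] field_simps)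

lemma lucn_conv_fib: "lucn n = 2 * int (fib (Suc n)) - int (fib n)"
  by (induction n rule: lucn.induct) auto

lemma lucn_square: "(lucn n)^2 = 5 * int (fib n)^2 + 4 * (-1)^n"
  using fib_Cassini_int[of n]
  by (simp add: lucn_conv_fib power2_eq_square algebra_simps)

lemma lucz_square:
  "(of_int (lucz r) :: 'a::field)^2 = 5 * of_int (fibz r)^2 + 4 * (-1) powi r"
proof (cases "r \<ge> 0")
  case True
  then obtain m where "r = int m"
    using nonneg_eq_int by blast
  then show ?thesis
    using arg_cong[OF lucn_square[of m], of "of_int :: int \<Rightarrow> 'a"]
    by (simp add: lucz_def fibz_def)
next
  case False
  then obtain m where "r = - int m"
    by (metis le_cases minus_minus neg_0_le_iff_le nonneg_eq_int)
  then show ?thesis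
    using False arg_cong[OF lucn_square[of m], of "of_int :: int \<Rightarrow> 'a"]
    by (simp add: lucz_def fibz_def power_int_minus_one_minus power_mult_distrib
        flip: power_mult)
qed

lemma five_square_ne_four: "5 * x^2 \<noteq> (4::int)"
proof
  assume "5 * x^2 = 4"
  then have "(5 * x^2) mod 5 = 4 mod 5"
    by simp
  then show False
    by simp
qed

lemma five_fibz_square_ne: "5 * real_of_int (fibz r)^2 \<noteq> 4 * (-1) powi r"
proof (cases "even r")
  case True
  have "5 * real_of_int (fibz r)^2 \<noteq> 4"
    using five_square_ne_four[of "fibz r"]
    by (metis of_int_eq_iff of_int_mult of_int_numeral of_int_power)
  then show ?thesis
    using True by simp
next
  case False
  have "5 * real_of_int (fibz r)^2 \<noteq> -4"
    by (smt (verit) zero_le_power2)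
  then show ?thesis
    using False by simp
qed

theorem theorem6:
  fixes r :: int and n :: nat
  shows "2 * (\<Sum>j=0..n. (-1::real) powi (r * int j) * 4 ^ j
              * (real_of_int (fibz r)) ^ (2*n - 2*j) * 5 ^ (n - j))
       = (\<Sum>j=0..n. ((real_of_int (lucz r))\<^sup>2 / 2) ^ j
              * (5 ^ (n - j) * (real_of_int (fibz r)) ^ (2 * (n - j))
                 + (-1::real) powi (r * int (n - j)) * 4 ^ (n - j)))
   \<and> (\<Sum>j=0..n. ((real_of_int (lucz r))\<^sup>2 / 2) ^ j
              * (5 ^ (n - j) * (real_of_int (fibz r)) ^ (2 * (n - j))
                 + (-1::real) powi (r * int (n - j)) * 4 ^ (n - j)))
       = 2 * (((5 * (real_of_int (fibz r))\<^sup>2) ^ (n + 1)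
                - (-1::real) powi (r * int (n + 1)) * 4 ^ (n + 1))
              / (5 * (real_of_int (fibz r))\<^sup>2 - (-1::real) powi r * 4))"
proof -
  define a where "a = 5 * (real_of_int (fibz r))\<^sup>2"
  define b where "b = (-1::real) powi r * 4"
  have b_power: "(-1::real) powi (r * int k) * 4 ^ k = b ^ k" for k
    by (simp add: b_def power_int_mult power_mult_distrib)
  have a_power: "5 ^ k * (real_of_int (fibz r)) ^ (2 * k) = a ^ k" for k
    by (simp add: a_def power_mult power_mult_distrib)
  have first: "(\<Sum>j=0..n. (-1::real) powi (r * int j) * 4 ^ j
              * (real_of_int (fibz r)) ^ (2*n - 2*j) * 5 ^ (n - j))
      = (\<Sum>j=0..n. b^j * a^(n - j))"
    by (rule sum.cong) (simp_all flip: a_power b_power add: diff_mult_distrib2)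
  have mean: "a + b = 2 * ((real_of_int (lucz r))\<^sup>2 / 2)"
    by (simp add: a_def b_def lucz_square mult.commute)
  have second: "(\<Sum>j=0..n. ((real_of_int (lucz r))\<^sup>2 / 2) ^ j
              * (5 ^ (n - j) * (real_of_int (fibz r)) ^ (2 * (n - j))
                 + (-1::real) powi (r * int (n - j)) * 4 ^ (n - j)))
      = 2 * (\<Sum>j=0..n. b^j * a^(n - j))"
    unfolding a_power b_power by (rule sum_mean_powers[OF mean])
  have "a \<noteq> b"
    using five_fibz_square_ne[of r] by (simp add: a_def b_def mult.commute)
  show ?thesis
    unfolding first second a_def[symmetric] b_def[symmetric]
    using sum_powers_closed_form[OF \<open>a \<noteq> b\<close>] b_power[of "n + 1"] by simp
qed

end
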